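(* Let $\lambda_1<\dots<\lambda_N$ be real and $u_1,\dots,u_N\in(-1,1)\setminus\{0\}$ with $\sum_{i=1}^Nu_i^2=1$, and set $s_{\lambda,u}(l)=\sum_{i=1}^N\frac{u_i^2}{l-\lambda_i}$ for $l>\lambda_N$. If $1>|\alpha|\ge|u_N|$, then $$\sup_{\sigma\in\mathbb{R}^N:\,|\sigma|=1,\,\sigma\cdot u=\alpha}\sum_{i=1}^N\lambda_i\sigma_i^2=\inf_{l>\lambda_N}\left\{l-\frac{\alpha^2}{s_{\lambda,u}(l)}\right\}.$$ If $\alpha\in[-|u_N|,|u_N|]$, then $$\lambda_N-\frac{2u_N^2}{\sqrt{1-u_N^2}}(\lambda_N-\lambda_1)\le\sup_{\sigma\in\mathbb{R}^N:\,|\sigma|=1,\,\sigma\cdot u=\alpha}\sum_{i=1}^N\lambda_i\sigma_i^2\le\lambda_N.$$ *)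

theory Defs
  imports Complex_Main
begin

text \<open>Vectors in R^N are rendered as functions nat => real, indexed by {1..N}.\<close>

definition s_lu :: "nat \<Rightarrow> (nat \<Rightarrow> real) \<Rightarrow> (nat \<Rightarrow> real) \<Rightarrow> real \<Rightarrow> real" where
  "s_lu N lam u l = (\<Sum>i=1..N. (u i)^2 / (l - lam i))"

definition constr_sup :: "nat \<Rightarrow> (nat \<Rightarrow> real) \<Rightarrow> (nat \<Rightarrow> real) \<Rightarrow> real \<Rightarrow> real" where
  "constr_sup N lam u \<alpha> = Sup {(\<Sum>i=1..N. lam i * (\<sigma> i)^2) | \<sigma> :: nat \<Rightarrow> real.
       (\<Sum>i=1..N. (\<sigma> i)^2) = 1 \<and> (\<Sum>i=1..N. \<sigma> i * u i) = \<alpha>}"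

end

theory Submission
  imports Defs "HOL-Analysis.Convex" "HOL-Real_Asymp.Real_Asymp"
begin

(* Write s(l) = \<Sum> u_i^2/(l - \<lambda>_i). For unit \<sigma> with \<sigma>\<cdot>u = \<alpha> and any l > \<lambda>_N, Cauchy-Schwarz with
   weights l - \<lambda>_i gives \<alpha>^2 \<le> (l - \<Sum> \<lambda>_i \<sigma>_i^2) s(l): every value is below every l - \<alpha>^2/s(l).
   If u_N^2 < \<alpha>^2 < 1, the secular equation s(l)^2 = \<alpha>^2 \<Sum> u_i^2/(l - \<lambda>_i)^2 changes sign on
   (\<lambda>_N, \<infinity>) (compare both sides near the pole \<lambda>_N and at infinity), and at a root the vector
   \<sigma>_i = \<alpha> u_i / (s(l) (l - \<lambda>_i)) attains the bound, so sup = inf.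
   If \<alpha>^2 \<le> u_N^2, take \<sigma> in the plane of e_N and the rest of u: of the two unit vectors there with
   \<sigma>\<cdot>u = \<alpha>, the one with the smaller off-axis component b has b^2 \<le> u_N^2 - \<alpha>^2 (the two
   components have product \<alpha>^2 - u_N^2), so its value is at least \<lambda>_N - (u_N^2 - \<alpha>^2)(\<lambda>_N - \<lambda>_1).
   This also settles the boundary case \<alpha>^2 = u_N^2 of the first claim. *)

lemma weighted_Cauchy_Schwarz_sum:
  fixes d x y :: "'a \<Rightarrow> real"
  assumes "\<And>i. i \<in> A \<Longrightarrow> d i > 0"
  shows "(\<Sum>i\<in>A. x i * y i)^2 \<le> (\<Sum>i\<in>A. d i * (x i)^2) * (\<Sum>i\<in>A. (y i)^2 / d i)"
proof -
  have "(\<Sum>i\<in>A. x i * y i) = (\<Sum>i\<in>A. (sqrt (d i) * x i) * (y i / sqrt (d i)))"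
    by (intro sum.cong) (auto dest: assms)
  also have "\<dots>^2 \<le> (\<Sum>i\<in>A. (sqrt (d i) * x i)^2) * (\<Sum>i\<in>A. (y i / sqrt (d i))^2)"
    by (rule Cauchy_Schwarz_ineq_sum)
  also have "\<dots> = (\<Sum>i\<in>A. d i * (x i)^2) * (\<Sum>i\<in>A. (y i)^2 / d i)"
    using assms by (simp add: power_mult_distrib power_divide less_imp_le)
  finally show ?thesis .
qed

lemma Rayleigh_sum_le_secular_dual:
  fixes lam u \<sigma> :: "'a \<Rightarrow> real"
  assumes "finite A" and lam_less: "\<And>i. i \<in> A \<Longrightarrow> lam i < l"
    and unit: "(\<Sum>i\<in>A. (\<sigma> i)^2) = 1"
  shows "(\<Sum>i\<in>A. lam i * (\<sigma> i)^2)
           \<le> l - (\<Sum>i\<in>A. \<sigma> i * u i)^2 / (\<Sum>i\<in>A. (u i)^2 / (l - lam i))"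
proof -
  define Q where "Q = (\<Sum>i\<in>A. (l - lam i) * (\<sigma> i)^2)"
  define s where "s = (\<Sum>i\<in>A. (u i)^2 / (l - lam i))"
  have gap: "(\<Sum>i\<in>A. lam i * (\<sigma> i)^2) = l - Q"
    using unit by (simp add: Q_def left_diff_distrib sum_subtractf sum_distrib_left[symmetric])
  have "Q \<ge> 0" "s \<ge> 0"
    using lam_less by (auto simp: Q_def s_def intro!: sum_nonneg dest: lam_less)
  moreover have "(\<Sum>i\<in>A. \<sigma> i * u i)^2 \<le> Q * s"
    unfolding Q_def s_def using lam_less by (intro weighted_Cauchy_Schwarz_sum) simp
  ultimately have "(\<Sum>i\<in>A. \<sigma> i * u i)^2 / s \<le> Q"
    by (cases "s = 0") (auto simp: divide_le_eq mult.commute)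
  then show ?thesis using gap by (simp add: s_def)
qed

lemma secular_root_attains_dual:
  fixes lam u :: "'a \<Rightarrow> real"
  assumes lam_less: "\<And>i. i \<in> A \<Longrightarrow> lam i < l"
    and s_eq: "s = (\<Sum>i\<in>A. (u i)^2 / (l - lam i))" and "s \<noteq> 0"
    and root: "s^2 = \<alpha>^2 * (\<Sum>i\<in>A. (u i)^2 / (l - lam i)^2)"
  obtains \<sigma> where "(\<Sum>i\<in>A. (\<sigma> i)^2) = 1" "(\<Sum>i\<in>A. \<sigma> i * u i) = \<alpha>"
    "(\<Sum>i\<in>A. lam i * (\<sigma> i)^2) = l - \<alpha>^2 / s"
proof
  define \<sigma> where "\<sigma> i = \<alpha> / s * u i / (l - lam i)" for i
  have "(\<Sum>i\<in>A. (\<sigma> i)^2) = (\<alpha> / s)^2 * (\<Sum>i\<in>A. (u i)^2 / (l - lam i)^2)"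
    by (simp add: \<sigma>_def sum_distrib_left power_mult_distrib power_divide)
  also have "\<dots> = s^2 / s^2"
    by (simp add: power_divide root)
  also have "\<dots> = 1"
    using \<open>s \<noteq> 0\<close> by simp
  finally show unit: "(\<Sum>i\<in>A. (\<sigma> i)^2) = 1" .
  have "(\<Sum>i\<in>A. \<sigma> i * u i) = \<alpha> / s * (\<Sum>i\<in>A. (u i)^2 / (l - lam i))"
    by (simp add: \<sigma>_def sum_distrib_left power2_eq_square mult_ac)
  then show "(\<Sum>i\<in>A. \<sigma> i * u i) = \<alpha>"
    using \<open>s \<noteq> 0\<close> by (simp flip: s_eq)
  have "(l - lam i) * (\<sigma> i)^2 = (\<alpha> / s)^2 * ((u i)^2 / (l - lam i))" if "i \<in> A" for i
    using lam_less[OF that] by (simp add: \<sigma>_def power2_eq_square mult_ac)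
  then have "(\<Sum>i\<in>A. (l - lam i) * (\<sigma> i)^2) = (\<alpha> / s)^2 * s"
    by (simp add: sum_distrib_left s_eq cong: sum.cong)
  moreover have "(\<Sum>i\<in>A. lam i * (\<sigma> i)^2) = l - (\<Sum>i\<in>A. (l - lam i) * (\<sigma> i)^2)"
    using unit by (simp add: left_diff_distrib sum_subtractf sum_distrib_left[symmetric])
  ultimately show "(\<Sum>i\<in>A. lam i * (\<sigma> i)^2) = l - \<alpha>^2 / s"
    using \<open>s \<noteq> 0\<close> by (simp add: power2_eq_square)
qed

lemma tendsto_scaled_partial_fractions_at_pole:
  fixes lam c :: "'a \<Rightarrow> real"
  assumes "finite A" "n \<in> A" "\<And>i. i \<in> A - {n} \<Longrightarrow> lam i \<noteq> lam n" "k > 0"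
  shows "((\<lambda>l. (l - lam n)^k * (\<Sum>i\<in>A. c i / (l - lam i)^k)) \<longlongrightarrow> c n) (at (lam n))"
proof -
  have "((\<lambda>l. c n + (\<Sum>i\<in>A-{n}. c i * ((l - lam n) / (l - lam i))^k))
          \<longlongrightarrow> c n + (\<Sum>i\<in>A-{n}. c i * ((lam n - lam n) / (lam n - lam i))^k)) (at (lam n))"
    by (intro tendsto_intros) (use assms(3) in fastforce)
  then have "((\<lambda>l. c n + (\<Sum>i\<in>A-{n}. c i * ((l - lam n) / (l - lam i))^k)) \<longlongrightarrow> c n) (at (lam n))"
    using \<open>k > 0\<close> by (simp add: zero_power)
  moreover have "c n + (\<Sum>i\<in>A-{n}. c i * ((l - lam n) / (l - lam i))^k)
                    = (l - lam n)^k * (\<Sum>i\<in>A. c i / (l - lam i)^k)" if "l \<noteq> lam n" for l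
    using assms(1,2) that by (simp add: sum.remove distrib_left sum_distrib_left power_divide mult_ac)
  then have "\<forall>\<^sub>F l in at (lam n). c n + (\<Sum>i\<in>A-{n}. c i * ((l - lam n) / (l - lam i))^k)
                    = (l - lam n)^k * (\<Sum>i\<in>A. c i / (l - lam i)^k)"
    unfolding eventually_at_filter by (intro always_eventually) blast
  ultimately show ?thesis
    by (rule Lim_transform_eventually)
qed

lemma tendsto_scaled_partial_fractions_at_top:
  fixes lam c :: "'a \<Rightarrow> real"
  shows "((\<lambda>l. l^k * (\<Sum>i\<in>A. c i / (l - lam i)^k)) \<longlongrightarrow> (\<Sum>i\<in>A. c i)) at_top"
proof -
  have "((\<lambda>l. l / (l - lam i)) \<longlongrightarrow> 1) at_top" for i
    by real_asymp
  then have "((\<lambda>l. \<Sum>i\<in>A. c i * (l / (l - lam i))^k) \<longlongrightarrow> (\<Sum>i\<in>A. c i * 1^k)) at_top"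
    by (intro tendsto_intros)
  then show ?thesis
    by (simp add: sum_distrib_left power_divide mult_ac)
qed

lemma secular_equation_has_root:
  fixes lam u :: "'a \<Rightarrow> real"
  assumes "finite A" "n \<in> A" and lam_less: "\<And>i. i \<in> A - {n} \<Longrightarrow> lam i < lam n"
    and u_norm: "(\<Sum>i\<in>A. (u i)^2) = 1" and "u n \<noteq> 0"
    and "(u n)^2 < \<alpha>^2" "\<alpha>^2 < 1"
  obtains l where "lam n < l"
    "(\<Sum>i\<in>A. (u i)^2 / (l - lam i))^2 = \<alpha>^2 * (\<Sum>i\<in>A. (u i)^2 / (l - lam i)^2)"
proof -
  \<comment> \<open>the exponent 1 lets the partial-fraction limits apply to s unchanged\<close>
  define s where "s l = (\<Sum>i\<in>A. (u i)^2 / (l - lam i)^1)" for l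
  define p where "p l = (\<Sum>i\<in>A. (u i)^2 / (l - lam i)^2)" for l
  define g where "g l = (s l)^2 - \<alpha>^2 * p l" for l
  have scaled: "(x^1 * s l)^2 - \<alpha>^2 * (x^2 * p l) = x^2 * g l" for x l
    by (simp add: g_def power_mult_distrib right_diff_distrib)
  have "((\<lambda>l. (l - lam n)^2 * g l) \<longlongrightarrow> ((u n)^2)^2 - \<alpha>^2 * (u n)^2) (at (lam n))"
    unfolding scaled[symmetric] s_def p_def using assms(1,2) lam_less
    by (intro tendsto_intros tendsto_scaled_partial_fractions_at_pole) force+
  then have "((\<lambda>l. (l - lam n)^2 * g l) \<longlongrightarrow> ((u n)^2)^2 - \<alpha>^2 * (u n)^2) (at_right (lam n))"
    using filterlim_at_split by blast
  moreover have "((u n)^2)^2 - \<alpha>^2 * (u n)^2 < 0"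
    using mult_strict_right_mono[OF assms(6) zero_less_power2[THEN iffD2, OF assms(5)]]
    by (simp add: power2_eq_square)
  ultimately have "\<forall>\<^sub>F l in at_right (lam n). (l - lam n)^2 * g l < 0"
    by (rule order_tendstoD(2))
  then have "\<forall>\<^sub>F l in at_right (lam n). lam n < l \<and> g l < 0"
    using eventually_at_right_less by eventually_elim (simp add: mult_less_0_iff)
  then obtain l0 where l0: "lam n < l0" "g l0 < 0"
    using eventually_happens' trivial_limit_at_right_real by blast
  have "((\<lambda>l. l^2 * g l) \<longlongrightarrow> 1^2 - \<alpha>^2 * 1) at_top"
    unfolding scaled[symmetric] s_def p_def u_norm[symmetric]
    by (intro tendsto_intros tendsto_scaled_partial_fractions_at_top)
  moreover have "0 < 1^2 - \<alpha>^2 * 1"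
    using \<open>\<alpha>^2 < 1\<close> by simp
  ultimately have "\<forall>\<^sub>F l in at_top. 0 < l^2 * g l"
    by (rule order_tendstoD(1))
  then have "\<forall>\<^sub>F l in at_top. l0 \<le> l \<and> g l > 0"
    using eventually_ge_at_top[of l0] by eventually_elim (auto simp: zero_less_mult_iff)
  then obtain l1 where l1: "l0 \<le> l1" "g l1 > 0"
    using eventually_happens' trivial_limit_at_top_linorder by blast
  have "continuous_on {l0..l1} g"
    unfolding g_def s_def p_def using l0(1) lam_less
    by (intro continuous_intros) force+
  then obtain l where "l0 \<le> l" "g l = 0"
    using IVT'[of g l0 0 l1] l0 l1 by force
  moreover from \<open>l0 \<le> l\<close> have "lam n < l"
    using l0(1) by linarith
  ultimately show ?thesis
    using that by (simp add: g_def s_def p_def)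
qed

lemma min_squares_le_abs_mult:
  fixes x y :: "'a :: linordered_idom"
  shows "min (x^2) (y^2) \<le> \<bar>x * y\<bar>"
proof -
  have sq_le: "a^2 \<le> \<bar>a * b\<bar>" if "\<bar>a\<bar> \<le> \<bar>b\<bar>" for a b :: 'a
    using that by (metis abs_ge_zero abs_mult abs_mult_self_eq mult_left_mono power2_eq_square)
  show ?thesis
    using sq_le[of x y] sq_le[of y x] by (cases "\<bar>x\<bar> \<le> \<bar>y\<bar>") (auto simp: mult.commute)
qed

lemma unit_circle_meets_line_near_axis:
  fixes c r \<alpha> :: real
  assumes "c^2 + r^2 = 1" "\<alpha>^2 \<le> c^2"
  obtains a b where "a^2 + b^2 = 1" "a * c + b * r = \<alpha>" "b^2 \<le> c^2 - \<alpha>^2"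
proof -
  define t where "t = sqrt (1 - \<alpha>^2)"
  have "\<alpha>^2 \<le> 1"
    using assms zero_le_power2[of r] by linarith
  then have t2: "t^2 = 1 - \<alpha>^2"
    by (simp add: t_def)
  have intersection: "(\<alpha> * c + t' * r)^2 + (\<alpha> * r - t' * c)^2 = 1"
    "(\<alpha> * c + t' * r) * c + (\<alpha> * r - t' * c) * r = \<alpha>" if "t'^2 = t^2" for t'
  proof -
    have "(\<alpha> * c + t' * r)^2 + (\<alpha> * r - t' * c)^2 = (\<alpha>^2 + t'^2) * (c^2 + r^2)"
      by (simp add: power2_eq_square algebra_simps)
    then show "(\<alpha> * c + t' * r)^2 + (\<alpha> * r - t' * c)^2 = 1"
      using assms(1) that t2 by simp
    have "(\<alpha> * c + t' * r) * c + (\<alpha> * r - t' * c) * r = \<alpha> * (c^2 + r^2)"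
      by (simp add: power2_eq_square algebra_simps)
    then show "(\<alpha> * c + t' * r) * c + (\<alpha> * r - t' * c) * r = \<alpha>"
      using assms(1) by simp
  qed
  have "(\<alpha> * r - t * c) * (\<alpha> * r + t * c) = \<alpha>^2 * (c^2 + r^2) - (\<alpha>^2 + t^2) * c^2"
    by (simp add: power2_eq_square algebra_simps)
  then have "(\<alpha> * r - t * c) * (\<alpha> * r + t * c) = -(c^2 - \<alpha>^2)"
    using assms(1) t2 by simp
  then have "min ((\<alpha> * r - t * c)^2) ((\<alpha> * r - (-t) * c)^2) \<le> c^2 - \<alpha>^2"
    using min_squares_le_abs_mult[of "\<alpha> * r - t * c" "\<alpha> * r + t * c"] assms(2) by simp
  then show ?thesis
    using that intersection[of t] intersection[of "-t"] by (auto simp: min_le_iff_disj)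
qed

lemma constrained_Rayleigh_value_near_top:
  fixes lam u :: "'a \<Rightarrow> real"
  assumes "finite A" "n \<in> A" and lam_ge: "\<And>i. i \<in> A \<Longrightarrow> lo \<le> lam i"
    and u_norm: "(\<Sum>i\<in>A. (u i)^2) = 1" and "(u n)^2 < 1" and "\<alpha>^2 \<le> (u n)^2"
  obtains \<sigma> where "(\<Sum>i\<in>A. (\<sigma> i)^2) = 1" "(\<Sum>i\<in>A. \<sigma> i * u i) = \<alpha>"
    "lam n - ((u n)^2 - \<alpha>^2) * (lam n - lo) \<le> (\<Sum>i\<in>A. lam i * (\<sigma> i)^2)"
proof -
  define r where "r = sqrt (1 - (u n)^2)"
  have "r > 0" and r2: "(u n)^2 + r^2 = 1"
    using \<open>(u n)^2 < 1\<close> by (simp_all add: r_def)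
  have rest: "(\<Sum>i\<in>A-{n}. (u i)^2) = r^2"
    using u_norm r2 assms(1,2) by (simp add: sum.remove)
  obtain a b where ab: "a^2 + b^2 = 1" "a * u n + b * r = \<alpha>" "b^2 \<le> (u n)^2 - \<alpha>^2"
    using unit_circle_meets_line_near_axis[OF r2 \<open>\<alpha>^2 \<le> (u n)^2\<close>] .
  define \<kappa> where "\<kappa> = b / r"
  have \<kappa>: "\<kappa>^2 * r^2 = b^2" "\<kappa> * r^2 = b * r"
    using \<open>r > 0\<close> by (simp_all add: \<kappa>_def power_divide power2_eq_square)
  define \<sigma> where "\<sigma> i = (if i = n then a else \<kappa> * u i)" for i
  have split: "(\<Sum>i\<in>A. f i (\<sigma> i)) = f n a + (\<Sum>i\<in>A-{n}. f i (\<kappa> * u i))" for f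
    using assms(1,2) by (simp add: sum.remove \<sigma>_def)
  show ?thesis
  proof
    have "(\<Sum>i\<in>A. (\<sigma> i)^2) = a^2 + \<kappa>^2 * r^2"
      using split[of "\<lambda>i x. x^2"] by (simp add: power_mult_distrib sum_distrib_left flip: rest)
    then show "(\<Sum>i\<in>A. (\<sigma> i)^2) = 1"
      using \<kappa>(1) ab(1) by simp
    have "(\<Sum>i\<in>A. \<sigma> i * u i) = a * u n + \<kappa> * r^2"
      using split[of "\<lambda>i x. x * u i"]
      by (simp add: mult.assoc rest flip: power2_eq_square sum_distrib_left)
    then show "(\<Sum>i\<in>A. \<sigma> i * u i) = \<alpha>"
      using \<kappa>(2) ab(2) by simp
    have "lo * \<kappa>^2 * r^2 \<le> (\<Sum>i\<in>A-{n}. lam i * (\<kappa> * u i)^2)"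
      unfolding rest[symmetric] sum_distrib_left power_mult_distrib
      by (intro sum_mono) (simp add: lam_ge mult_right_mono mult.assoc[symmetric])
    then have "lam n * a^2 + lo * b^2 \<le> (\<Sum>i\<in>A. lam i * (\<sigma> i)^2)"
      using split[of "\<lambda>i x. lam i * x^2"] \<kappa>(1) by (simp add: mult.assoc)
    moreover have "lam n * a^2 + lo * b^2 = lam n - b^2 * (lam n - lo)"
      using ab(1) by (simp add: algebra_simps flip: distrib_left)
    moreover have "b^2 * (lam n - lo) \<le> ((u n)^2 - \<alpha>^2) * (lam n - lo)"
      using ab(3) lam_ge[OF \<open>n \<in> A\<close>] by (intro mult_right_mono) auto
    ultimately show "lam n - ((u n)^2 - \<alpha>^2) * (lam n - lo) \<le> (\<Sum>i\<in>A. lam i * (\<sigma> i)^2)"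
      by linarith
  qed
qed

lemma Sup_eq_Inf_if_gap_vanishes:
  fixes S T :: "real set"
  assumes below: "\<And>x y. x \<in> S \<Longrightarrow> y \<in> T \<Longrightarrow> x \<le> y"
    and gap: "\<And>e. e > 0 \<Longrightarrow> \<exists>x\<in>S. \<exists>y\<in>T. y \<le> x + e"
  shows "Sup S = Inf T"
proof -
  obtain x0 y0 where "x0 \<in> S" "y0 \<in> T"
    using gap[of 1] by auto
  then have "S \<noteq> {}" "T \<noteq> {}" "bdd_above S" "bdd_below T"
    using below by (auto simp: bdd_above_def bdd_below_def)
  have "Sup S \<le> Inf T"
    using below \<open>S \<noteq> {}\<close> \<open>T \<noteq> {}\<close> by (intro cInf_greatest cSup_least) auto
  moreover have "Inf T \<le> Sup S"
  proof (rule field_le_epsilon)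
    fix e :: real
    assume "e > 0"
    then obtain x y where "x \<in> S" "y \<in> T" "y \<le> x + e"
      using gap by blast
    then show "Inf T \<le> Sup S + e"
      using cInf_lower[OF \<open>y \<in> T\<close> \<open>bdd_below T\<close>] cSup_upper[OF \<open>x \<in> S\<close> \<open>bdd_above S\<close>] by linarith
  qed
  ultimately show ?thesis
    by simp
qed

definition constrained_Rayleigh_values :: "'a set \<Rightarrow> ('a \<Rightarrow> real) \<Rightarrow> ('a \<Rightarrow> real) \<Rightarrow> real \<Rightarrow> real set"
  where "constrained_Rayleigh_values A lam u \<alpha> =
    {(\<Sum>i\<in>A. lam i * (\<sigma> i)^2) | \<sigma>. (\<Sum>i\<in>A. (\<sigma> i)^2) = 1 \<and> (\<Sum>i\<in>A. \<sigma> i * u i) = \<alpha>}"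

definition secular_dual_values :: "'a set \<Rightarrow> ('a \<Rightarrow> real) \<Rightarrow> ('a \<Rightarrow> real) \<Rightarrow> real \<Rightarrow> real \<Rightarrow> real set"
  where "secular_dual_values A lam u \<alpha> t =
    {l - \<alpha>^2 / (\<Sum>i\<in>A. (u i)^2 / (l - lam i)) | l. t < l}"

lemma constrained_Rayleigh_values_le_secular_dual_values:
  fixes lam u :: "'a \<Rightarrow> real"
  assumes "finite A" and lam_le: "\<And>i. i \<in> A \<Longrightarrow> lam i \<le> t"
    and "x \<in> constrained_Rayleigh_values A lam u \<alpha>" "y \<in> secular_dual_values A lam u \<alpha> t"
  shows "x \<le> y"
proof -
  obtain \<sigma> l where \<sigma>: "(\<Sum>i\<in>A. (\<sigma> i)^2) = 1" "(\<Sum>i\<in>A. \<sigma> i * u i) = \<alpha>" and "t < l"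
    and "x = (\<Sum>i\<in>A. lam i * (\<sigma> i)^2)" "y = l - \<alpha>^2 / (\<Sum>i\<in>A. (u i)^2 / (l - lam i))"
    using assms(3,4) unfolding constrained_Rayleigh_values_def secular_dual_values_def by blast
  moreover have "\<And>i. i \<in> A \<Longrightarrow> lam i < l"
    using lam_le \<open>t < l\<close> by (meson le_less_trans)
  ultimately show ?thesis
    using Rayleigh_sum_le_secular_dual[OF assms(1) _ \<sigma>(1), of lam l u] by simp
qed

lemma secular_root_in_constrained_Rayleigh_values:
  fixes lam u :: "'a \<Rightarrow> real"
  assumes "finite A" "n \<in> A" and lam_less: "\<And>i. i \<in> A - {n} \<Longrightarrow> lam i < lam n"
    and u_norm: "(\<Sum>i\<in>A. (u i)^2) = 1" and "u n \<noteq> 0"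
    and "(u n)^2 < \<alpha>^2" "\<alpha>^2 < 1"
  obtains v where "v \<in> constrained_Rayleigh_values A lam u \<alpha>" "v \<in> secular_dual_values A lam u \<alpha> (lam n)"
proof -
  define s where "s l = (\<Sum>i\<in>A. (u i)^2 / (l - lam i))" for l
  obtain l where "lam n < l" and root: "(s l)^2 = \<alpha>^2 * (\<Sum>i\<in>A. (u i)^2 / (l - lam i)^2)"
    using secular_equation_has_root[where lam = lam, OF assms(1,2) lam_less u_norm \<open>u n \<noteq> 0\<close>]
      \<open>(u n)^2 < \<alpha>^2\<close> \<open>\<alpha>^2 < 1\<close>
    unfolding s_def by blast
  have lam_less_l: "lam i < l" if "i \<in> A" for i
    using lam_less[of i] that \<open>lam n < l\<close> by (cases "i = n") auto
  have "s l > 0"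
    unfolding s_def
  proof (rule sum_pos2[OF assms(1,2)])
    show "(u n)^2 / (l - lam n) > 0"
      using \<open>lam n < l\<close> \<open>u n \<noteq> 0\<close> by simp
    show "(u i)^2 / (l - lam i) \<ge> 0" if "i \<in> A" for i
      using lam_less_l[OF that] by simp
  qed
  then obtain \<sigma> where "(\<Sum>i\<in>A. (\<sigma> i)^2) = 1" "(\<Sum>i\<in>A. \<sigma> i * u i) = \<alpha>"
    and "(\<Sum>i\<in>A. lam i * (\<sigma> i)^2) = l - \<alpha>^2 / s l"
    using secular_root_attains_dual[OF lam_less_l s_def[of l] _ root] by force
  then show ?thesis
    using that \<open>lam n < l\<close>
    unfolding constrained_Rayleigh_values_def secular_dual_values_def s_def by blast
qed

lemma Sup_constrained_Rayleigh_eq_Inf_secular_dual: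
  fixes lam u :: "'a \<Rightarrow> real"
  assumes "finite A" "n \<in> A" and lam_less: "\<And>i. i \<in> A - {n} \<Longrightarrow> lam i < lam n"
    and u_norm: "(\<Sum>i\<in>A. (u i)^2) = 1" and "u n \<noteq> 0"
    and "(u n)^2 \<le> \<alpha>^2" "\<alpha>^2 < 1"
  shows "Sup (constrained_Rayleigh_values A lam u \<alpha>) = Inf (secular_dual_values A lam u \<alpha> (lam n))"
proof (rule Sup_eq_Inf_if_gap_vanishes)
  have lam_le: "lam i \<le> lam n" if "i \<in> A" for i
    using lam_less[of i] that by (cases "i = n") auto
  show "x \<le> y" if "x \<in> constrained_Rayleigh_values A lam u \<alpha>"
    and "y \<in> secular_dual_values A lam u \<alpha> (lam n)" for x y
    using constrained_Rayleigh_values_le_secular_dual_values[OF assms(1) lam_le that] .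
  fix e :: real
  assume "e > 0"
  show "\<exists>x\<in>constrained_Rayleigh_values A lam u \<alpha>. \<exists>y\<in>secular_dual_values A lam u \<alpha> (lam n). y \<le> x + e"
  proof (cases "\<alpha>^2 = (u n)^2")
    case True
    have "\<And>i. i \<in> A \<Longrightarrow> Min (lam ` A) \<le> lam i" "(u n)^2 < 1" "\<alpha>^2 \<le> (u n)^2"
      using assms(1) True \<open>\<alpha>^2 < 1\<close> by simp_all
    then obtain \<sigma> where "(\<Sum>i\<in>A. (\<sigma> i)^2) = 1" "(\<Sum>i\<in>A. \<sigma> i * u i) = \<alpha>"
      and "lam n - ((u n)^2 - \<alpha>^2) * (lam n - Min (lam ` A)) \<le> (\<Sum>i\<in>A. lam i * (\<sigma> i)^2)"
      using constrained_Rayleigh_value_near_top[OF assms(1,2) _ u_norm] by blast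
    then obtain x where "x \<in> constrained_Rayleigh_values A lam u \<alpha>" "lam n \<le> x"
      using True unfolding constrained_Rayleigh_values_def by auto
    define l where "l = lam n + e"
    have "0 \<le> (\<Sum>i\<in>A. (u i)^2 / (l - lam i))"
      using lam_le \<open>e > 0\<close> by (force simp: l_def intro: sum_nonneg)
    then have "0 \<le> \<alpha>^2 / (\<Sum>i\<in>A. (u i)^2 / (l - lam i))"
      by simp
    then have "l - \<alpha>^2 / (\<Sum>i\<in>A. (u i)^2 / (l - lam i)) \<le> x + e"
      using \<open>lam n \<le> x\<close> unfolding l_def by linarith
    moreover have "l - \<alpha>^2 / (\<Sum>i\<in>A. (u i)^2 / (l - lam i)) \<in> secular_dual_values A lam u \<alpha> (lam n)"
      using \<open>e > 0\<close> unfolding secular_dual_values_def l_def by force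
    ultimately show ?thesis
      using \<open>x \<in> constrained_Rayleigh_values A lam u \<alpha>\<close> by blast
  next
    case False
    then obtain v where "v \<in> constrained_Rayleigh_values A lam u \<alpha>" "v \<in> secular_dual_values A lam u \<alpha> (lam n)"
      using secular_root_in_constrained_Rayleigh_values[where lam = lam, OF assms(1,2) lam_less u_norm \<open>u n \<noteq> 0\<close>]
        \<open>(u n)^2 \<le> \<alpha>^2\<close> \<open>\<alpha>^2 < 1\<close> by force
    moreover have "v \<le> v + e"
      using \<open>e > 0\<close> by simp
    ultimately show ?thesis
      by blast
  qed
qed

lemma Rayleigh_sum_le_upper_bound:
  fixes lam \<sigma> :: "'a \<Rightarrow> real"
  assumes "\<And>i. i \<in> A \<Longrightarrow> lam i \<le> t" and "(\<Sum>i\<in>A. (\<sigma> i)^2) = 1"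
  shows "(\<Sum>i\<in>A. lam i * (\<sigma> i)^2) \<le> t"
proof -
  have "(\<Sum>i\<in>A. lam i * (\<sigma> i)^2) \<le> (\<Sum>i\<in>A. t * (\<sigma> i)^2)"
    using assms(1) by (intro sum_mono mult_right_mono) auto
  then show ?thesis
    using assms(2) by (simp flip: sum_distrib_left)
qed

lemma Sup_constrained_Rayleigh_bounds:
  fixes lam u :: "'a \<Rightarrow> real"
  assumes "finite A" "n \<in> A" and lam_between: "\<And>i. i \<in> A \<Longrightarrow> lo \<le> lam i \<and> lam i \<le> lam n"
    and u_norm: "(\<Sum>i\<in>A. (u i)^2) = 1" and "(u n)^2 < 1" and "\<alpha>^2 \<le> (u n)^2"
  shows "lam n - ((u n)^2 - \<alpha>^2) * (lam n - lo) \<le> Sup (constrained_Rayleigh_values A lam u \<alpha>)"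
    and "Sup (constrained_Rayleigh_values A lam u \<alpha>) \<le> lam n"
proof -
  have top: "x \<le> lam n" if "x \<in> constrained_Rayleigh_values A lam u \<alpha>" for x
    using that lam_between Rayleigh_sum_le_upper_bound[of A lam "lam n"]
    by (auto simp: constrained_Rayleigh_values_def)
  obtain \<sigma> where \<sigma>: "(\<Sum>i\<in>A. (\<sigma> i)^2) = 1" "(\<Sum>i\<in>A. \<sigma> i * u i) = \<alpha>"
    "lam n - ((u n)^2 - \<alpha>^2) * (lam n - lo) \<le> (\<Sum>i\<in>A. lam i * (\<sigma> i)^2)"
    using constrained_Rayleigh_value_near_top[OF assms(1,2) _ u_norm assms(5,6)] lam_between
    by blast
  then have "(\<Sum>i\<in>A. lam i * (\<sigma> i)^2) \<in> constrained_Rayleigh_values A lam u \<alpha>"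
    by (auto simp: constrained_Rayleigh_values_def)
  then show "lam n - ((u n)^2 - \<alpha>^2) * (lam n - lo) \<le> Sup (constrained_Rayleigh_values A lam u \<alpha>)"
    and "Sup (constrained_Rayleigh_values A lam u \<alpha>) \<le> lam n"
    using \<sigma>(3) top by (auto intro!: cSup_upper2 cSup_least bdd_aboveI)
qed

lemma square_le_twice_div_sqrt:
  fixes c :: real
  assumes "c^2 < 1"
  shows "c^2 \<le> 2 * c^2 / sqrt (1 - c^2)"
proof -
  have "0 < sqrt (1 - c^2)" "sqrt (1 - c^2) \<le> 1"
    using assms by auto
  then have "c^2 * sqrt (1 - c^2) \<le> 2 * c^2"
    using mult_left_le[of "sqrt (1 - c^2)" "c^2"] zero_le_power2[of c] by linarith
  then show ?thesis
    using \<open>0 < sqrt (1 - c^2)\<close> by (simp add: le_divide_eq)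
qed

theorem lemma3p1:
  fixes N :: nat and lam u :: "nat \<Rightarrow> real" and \<alpha> :: real
  assumes lam_mono: "\<And>i j. 1 \<le> i \<Longrightarrow> i < j \<Longrightarrow> j \<le> N \<Longrightarrow> lam i < lam j"
    and u_range: "\<And>i. 1 \<le> i \<Longrightarrow> i \<le> N \<Longrightarrow> u i \<in> {-1<..<1} - {0}"
    and u_norm: "(\<Sum>i=1..N. (u i)^2) = 1"
  shows "(\<bar>\<alpha>\<bar> < 1 \<and> \<bar>\<alpha>\<bar> \<ge> \<bar>u N\<bar> \<longrightarrow>
           constr_sup N lam u \<alpha> = Inf {l - \<alpha>^2 / s_lu N lam u l | l. l > lam N})
       \<and> (\<bar>\<alpha>\<bar> \<le> \<bar>u N\<bar> \<longrightarrow>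
           lam N - 2 * (u N)^2 / sqrt (1 - (u N)^2) * (lam N - lam 1) \<le> constr_sup N lam u \<alpha>
           \<and> constr_sup N lam u \<alpha> \<le> lam N)"
proof -
  have "1 \<le> N"
    using u_norm by (cases N) auto
  then have N: "N \<in> {1..N}" and "u N \<noteq> 0" "(u N)^2 < 1"
    using u_range[OF \<open>1 \<le> N\<close> order_refl] by (auto simp: abs_square_less_1)
  have lam_less: "\<And>i. i \<in> {1..N} - {N} \<Longrightarrow> lam i < lam N"
    and lam_between: "\<And>i. i \<in> {1..N} \<Longrightarrow> lam 1 \<le> lam i \<and> lam i \<le> lam N"
    using lam_mono by (fastforce simp: le_less)+
  have sup: "constr_sup N lam u \<alpha> = Sup (constrained_Rayleigh_values {1..N} lam u \<alpha>)"
    and dual: "{l - \<alpha>^2 / s_lu N lam u l | l. l > lam N} = secular_dual_values {1..N} lam u \<alpha> (lam N)"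
    by (simp_all add: constr_sup_def constrained_Rayleigh_values_def s_lu_def secular_dual_values_def)
  show ?thesis
  proof (intro conjI impI)
    assume "\<bar>\<alpha>\<bar> < 1 \<and> \<bar>\<alpha>\<bar> \<ge> \<bar>u N\<bar>"
    then have "(u N)^2 \<le> \<alpha>^2" "\<alpha>^2 < 1"
      by (auto simp: abs_le_square_iff abs_square_less_1)
    then show "constr_sup N lam u \<alpha> = Inf {l - \<alpha>^2 / s_lu N lam u l | l. l > lam N}"
      unfolding sup dual
      using Sup_constrained_Rayleigh_eq_Inf_secular_dual[OF finite_atLeastAtMost N, of lam u \<alpha>]
        lam_less u_norm \<open>u N \<noteq> 0\<close> by blast
  next
    assume "\<bar>\<alpha>\<bar> \<le> \<bar>u N\<bar>"
    then have "\<alpha>^2 \<le> (u N)^2"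
      by (simp add: abs_le_square_iff)
    note bounds = Sup_constrained_Rayleigh_bounds[where lam = lam,
        OF finite_atLeastAtMost N lam_between u_norm \<open>(u N)^2 < 1\<close> this]
    have "((u N)^2 - \<alpha>^2) * (lam N - lam 1) \<le> 2 * (u N)^2 / sqrt (1 - (u N)^2) * (lam N - lam 1)"
      using square_le_twice_div_sqrt[OF \<open>(u N)^2 < 1\<close>] lam_between[OF N] zero_le_power2[of \<alpha>]
      by (intro mult_right_mono) linarith+
    then show "lam N - 2 * (u N)^2 / sqrt (1 - (u N)^2) * (lam N - lam 1) \<le> constr_sup N lam u \<alpha>"
      unfolding sup using bounds(1) by linarith
    show "constr_sup N lam u \<alpha> \<le> lam N"
      unfolding sup using bounds(2) .
  qed
qed

end
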